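(* Let $\mathcal{M}\subseteq\mathbb{F}_{q^n}^{2\times2}$ be a matrix field isomorphic to $\mathbb{F}_{q^t}$, where $1\le t\le n$ and $t$ divides $n$. If $\mathcal{M}$ contains a nonsingular matrix, then there exist $P\in\mathrm{GL}(2,q^n)$ and $\sigma\in\mathrm{Aut}(\mathbb{F}_{q^t})$ such that \[P\mathcal{M}P^{-1}=\left\{\begin{pmatrix}x&0\\0&x^\sigma\end{pmatrix}\colon x\in\mathbb{F}_{q^t}\right\}.\] In addition, if $\mathrm{diag}(x,x)\in\mathcal{M}$ for every $x\in\mathbb{F}_q$, then $\sigma\in\mathrm{Gal}(\mathbb{F}_{q^t}|\mathbb{F}_q)$.
   Context: $q$ is a prime power and $n\ge1$. A matrix field in $\mathbb{F}_{q^n}^{2\times2}$ is a subset which is a field with respect to the matrix addition and multiplication inherited from $\mathbb{F}_{q^n}^{2\times2}$ (its identity element need not be the identity matrix). *)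

theory Defs
  imports "HOL-Analysis.Determinants" "HOL-Algebra.QuotRing" "HOL-Computational_Algebra.Primes"
begin

text \<open>A matrix field: a subset of the 2x2 matrices that is a field w.r.t. the inherited
  matrix addition and multiplication (zero and identity are whatever elements of M
  serve as such; in particular the identity need not be the identity matrix).\<close>
definition matrix_field_ring :: "('a::field^2^2) set \<Rightarrow> 'a^2^2 \<Rightarrow> 'a^2^2 \<Rightarrow> ('a^2^2) ring" where
  "matrix_field_ring M z e = \<lparr>carrier = M, monoid.mult = (**), one = e, zero = z, add = (+)\<rparr>"

definition is_matrix_field :: "('a::field^2^2) set \<Rightarrow> bool" where
  "is_matrix_field M \<longleftrightarrow> (\<exists>z e. field (matrix_field_ring M z e))"

text \<open>The subfield of a field 'a consisting of the roots of X^m - X (for CARD('a) = q^n and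
  m = q^t with t dvd n, this is the unique subfield F_{q^t}).\<close>
definition roots_field :: "nat \<Rightarrow> 'a::field set" where
  "roots_field m = {x. x ^ m = x}"

definition subfield_ring :: "'a::field set \<Rightarrow> 'a ring" where
  "subfield_ring S = \<lparr>carrier = S, monoid.mult = (*), one = 1, zero = 0, add = (+)\<rparr>"

definition diag2 :: "'a::zero \<Rightarrow> 'a \<Rightarrow> 'a^2^2" where
  "diag2 x y = (\<chi> i j. if i = j then (if i = 1 then x else y) else 0)"

end

(* If M contains a nonsingular matrix A, then A e = A forces the identity e of M
   to be the identity matrix, so M is a field under the usual matrix operations.  Transporting
   y^(q^t) = y along the isomorphism with F_{q^t} gives X^(q^t) = X, hence X^(q^n) = X, for every
   X in M; this is the only consequence of the hypotheses on q, n and t that is needed.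

   For a non-scalar X in M, Cayley-Hamilton turns X^(q^n) = X into: the characteristic polynomial
   of X divides Y^(q^n) - Y.  The cofactor has degree q^n - 2 and vanishes at every non-root of
   the characteristic polynomial, so the latter has two distinct roots in F_{q^n} and X is
   diagonalisable.  As M is commutative, the same P diagonalises all of M (if M consists of scalar
   matrices, take P = I).

   Each diagonal entry of P M P^-1 is then an injective field homomorphism into F_{q^t}, hence
   onto by counting, and sigma is the second entry composed with the inverse of the first.
   Scalar matrices are unchanged by conjugation, so diag(x, x) in M forces sigma x = x. *)

theory Submission
  imports Defs "HOL-Computational_Algebra.Polynomial"
begin

section \<open>Finite fields\<close>

lemma power_card_eq_self:
  fixes x :: "'a::{finite,field}"
  shows "x ^ CARD('a) = x"
proof (cases "x = 0")
  case False
  define S where "S = (UNIV::'a set) - {0}"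
  have inj: "inj_on ((*) x) S"
    using False by (auto simp: S_def inj_on_def)
  have img: "(*) x ` S = S"
  proof
    show "S \<subseteq> (*) x ` S"
    proof
      fix y assume "y \<in> S"
      then show "y \<in> (*) x ` S"
        using False by (auto simp: S_def image_iff intro!: bexI[of _ "y / x"])
    qed
  qed (use False in \<open>auto simp: S_def\<close>)
  have "\<Prod>S = (\<Prod>y\<in>S. x * y)"
    using prod.reindex[OF inj, of id] by (simp add: img)
  also have "\<dots> = x ^ card S * \<Prod>S"
    by (simp add: prod.distrib)
  finally have "x ^ card S = 1"
    by (simp add: S_def)
  moreover have "CARD('a) = Suc (card S)"
    by (simp add: S_def card_Diff_singleton Suc_diff_1)
  ultimately show ?thesis
    by simp
qed simp

lemma card_poly_roots_eq_degree:
  fixes c :: "'a::{finite,field} poly"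
  assumes "c dvd monom 1 CARD('a) - [:0, 1:]"
  shows "card {x. poly c x = 0} = degree c"
proof -
  define N where "N = CARD('a)"
  obtain Q where Q: "monom 1 N - [:0, 1:] = c * Q"
    using assms by (auto simp: N_def)
  have "card {0::'a, 1} \<le> N"
    unfolding N_def by (rule card_mono) auto
  then have N: "2 \<le> N"
    by simp
  then have "coeff (monom 1 N - [:0, 1:]) N = (1::'a)"
    by (simp add: coeff_pCons split: nat.split)
  then have "c * Q \<noteq> 0" and "degree (c * Q) \<le> N"
    using Q N degree_diff_le[of "monom (1::'a) N" N "[:0, 1:]"] by (auto simp: degree_monom_le)
  then have "c \<noteq> 0" "Q \<noteq> 0" "degree c + degree Q \<le> N"
    by (auto simp: degree_mult_eq)
  have "- {x. poly c x = 0} \<subseteq> {x. poly Q x = 0}"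
  proof
    fix x assume "x \<in> - {x. poly c x = 0}"
    moreover have "poly (c * Q) x = 0"
      unfolding Q[symmetric] using power_card_eq_self[of x] by (simp add: poly_monom N_def)
    ultimately show "x \<in> {x. poly Q x = 0}"
      by simp
  qed
  then have "card (- {x. poly c x = 0}) \<le> degree Q"
    using card_mono[of "{x. poly Q x = 0}"] card_poly_roots_bound[OF \<open>Q \<noteq> 0\<close>]
    by (meson finite le_trans)
  moreover have "card (- {x. poly c x = 0}) = N - card {x. poly c x = 0}"
    unfolding N_def by (simp add: Compl_eq_Diff_UNIV card_Diff_subset)
  moreover have "card {x. poly c x = 0} \<le> degree c"
    using card_poly_roots_bound[OF \<open>c \<noteq> 0\<close>] by simp
  ultimately show ?thesis
    using \<open>degree c + degree Q \<le> N\<close> card_mono[of UNIV "{x. poly c x = 0}"]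
    unfolding N_def by fastforce
qed

section \<open>Inverses, conjugation and powers of square matrices\<close>

lemma matrix_inv_unique:
  fixes A B :: "'a::semiring_1^'n^'n"
  assumes "A ** B = mat 1" and "B ** A = mat 1"
  shows "matrix_inv A = B"
proof -
  have inv: "A ** matrix_inv A = mat 1 \<and> matrix_inv A ** A = mat 1"
    unfolding matrix_inv_def by (rule someI[of _ B]) (use assms in simp)
  have "B = (matrix_inv A ** A) ** B"
    using inv by simp
  also have "\<dots> = matrix_inv A"
    by (simp add: assms flip: matrix_mul_assoc)
  finally show ?thesis ..
qed

lemma matrix_inv_right:
  fixes A :: "'a::semiring_1^'n^'n"
  assumes "invertible A"
  shows "A ** matrix_inv A = mat 1" and "matrix_inv A ** A = mat 1"
  using assms matrix_inv_unique unfolding invertible_def by metis+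

lemma invertible_mat_1: "invertible (mat 1 :: 'a::semiring_1^'n^'n)"
  by (auto simp: invertible_def)

lemma matrix_inv_mat_1: "matrix_inv (mat 1 :: 'a::semiring_1^'n^'n) = mat 1"
  by (simp add: matrix_inv_unique)

lemma matrix_mult_rdistrib:
  fixes A B :: "'a::semiring_1^'n^'m" and C :: "'a^'p^'n"
  shows "(A + B) ** C = A ** C + B ** C"
  by (vector matrix_matrix_mult_def sum.distrib[symmetric] distrib_right)

lemma mat_matrix_mult_commute:
  fixes A :: "'a::comm_semiring_1^'n^'n"
  shows "mat c ** A = A ** mat c"
  by (simp add: matrix_matrix_mult_def mat_def vec_eq_iff if_distrib if_distribR mult.commute
      sum.delta sum.delta' cong: if_cong)

lemma conj_matrix_mult:
  fixes P A B :: "'a::semiring_1^'n^'n"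
  assumes "invertible P"
  shows "P ** (A ** B) ** matrix_inv P = (P ** A ** matrix_inv P) ** (P ** B ** matrix_inv P)"
proof -
  have "(P ** A ** matrix_inv P) ** (P ** B ** matrix_inv P)
      = P ** A ** (matrix_inv P ** P) ** B ** matrix_inv P"
    by (simp add: matrix_mul_assoc)
  then show ?thesis
    by (simp add: matrix_inv_right[OF assms] matrix_mul_assoc)
qed

lemma conj_matrix_add:
  fixes P A B :: "'a::semiring_1^'n^'n"
  shows "P ** (A + B) ** matrix_inv P = P ** A ** matrix_inv P + P ** B ** matrix_inv P"
  by (simp add: matrix_add_ldistrib matrix_mult_rdistrib)

lemma conj_mat:
  fixes P :: "'a::comm_semiring_1^'n^'n"
  assumes "invertible P"
  shows "P ** mat c ** matrix_inv P = mat c"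
proof -
  have "P ** mat c ** matrix_inv P = mat c ** (P ** matrix_inv P)"
    by (simp add: mat_matrix_mult_commute matrix_mul_assoc)
  then show ?thesis
    by (simp add: matrix_inv_right[OF assms])
qed

lemma conj_inj:
  fixes P A B :: "'a::semiring_1^'n^'n"
  assumes "invertible P" and "P ** A ** matrix_inv P = P ** B ** matrix_inv P"
  shows "A = B"
proof -
  have "matrix_inv P ** (P ** X ** matrix_inv P) ** P = X" for X
  proof -
    have "matrix_inv P ** (P ** X ** matrix_inv P) ** P
        = (matrix_inv P ** P) ** X ** (matrix_inv P ** P)"
      by (simp add: matrix_mul_assoc)
    then show ?thesis
      by (simp add: matrix_inv_right[OF assms(1)])
  qed
  then show ?thesis
    using assms(2) by metis
qed

primrec matpow :: "'a::semiring_1^'n^'n \<Rightarrow> nat \<Rightarrow> 'a^'n^'n" where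
  "matpow A 0 = mat 1"
| "matpow A (Suc k) = matpow A k ** A"

lemma matpow_add: "matpow A (j + k) = matpow A j ** matpow A k"
  by (induction k) (simp_all add: matrix_mul_assoc)

lemma matpow_mult: "matpow A (j * k) = matpow (matpow A j) k"
proof (induction k)
  case (Suc k)
  have "matpow A (j * Suc k) = matpow A (j * k + j)"
    by (simp add: add.commute)
  then show ?case
    by (simp only: matpow_add Suc matpow.simps)
qed simp

lemma matpow_power_eq_self:
  assumes "matpow A m = A"
  shows "matpow A (m ^ j) = A"
  by (induction j) (simp_all add: power_Suc2 matpow_mult assms)

section \<open>Diagonalising 2x2 matrices\<close>

lemma mat2_eq_iff:
  "(A::'a^2^2) = B \<longleftrightarrow> A$1$1 = B$1$1 \<and> A$1$2 = B$1$2 \<and> A$2$1 = B$2$1 \<and> A$2$2 = B$2$2"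
  by (auto simp: vec_eq_iff forall_2)

lemma matrix_mult_2x2_nth [simp]:
  fixes A B :: "'a::semiring_1^2^2"
  shows "(A ** B) $ 1 $ 1 = A$1$1 * B$1$1 + A$1$2 * B$2$1"
    and "(A ** B) $ 1 $ 2 = A$1$1 * B$1$2 + A$1$2 * B$2$2"
    and "(A ** B) $ 2 $ 1 = A$2$1 * B$1$1 + A$2$2 * B$2$1"
    and "(A ** B) $ 2 $ 2 = A$2$1 * B$1$2 + A$2$2 * B$2$2"
  by (simp_all add: matrix_matrix_mult_def sum_2)

lemma mat_2x2_nth [simp]:
  "(mat c :: 'a::zero^2^2) $ 1 $ 1 = c" "(mat c :: 'a^2^2) $ 1 $ 2 = 0"
  "(mat c :: 'a^2^2) $ 2 $ 1 = 0" "(mat c :: 'a^2^2) $ 2 $ 2 = c"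
  by (simp_all add: mat_def)

lemma diag2_nth [simp]:
  "diag2 x y $ 1 $ 1 = x" "diag2 x y $ 1 $ 2 = 0" "diag2 x y $ 2 $ 1 = 0" "diag2 x y $ 2 $ 2 = y"
  by (simp_all add: diag2_def)

lemma diag2_same: "diag2 x x = mat x"
  by (simp add: mat2_eq_iff)

lemma trace_2: "trace (A::'a::comm_ring_1^2^2) = A$1$1 + A$2$2"
  by (simp add: trace_def sum_2)

lemma matpow_diag2: "matpow (diag2 x y) k = diag2 (x ^ k) (y ^ k)"
  by (induction k) (simp_all add: mat2_eq_iff power_commutes)

lemma commute_diag2_imp_diagonal:
  fixes C :: "'a::field^2^2"
  assumes "C ** diag2 d1 d2 = diag2 d1 d2 ** C" and "d1 \<noteq> d2"
  shows "C = diag2 (C$1$1) (C$2$2)"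
proof -
  have "C$1$2 * (d2 - d1) = 0" and "C$2$1 * (d1 - d2) = 0"
    using assms(1) unfolding mat2_eq_iff by (simp_all add: algebra_simps)
  then show ?thesis
    using assms(2) by (simp add: mat2_eq_iff)
qed

definition char_poly2 :: "'a::comm_ring_1^2^2 \<Rightarrow> 'a poly" where
  "char_poly2 B = [:det B, - trace B, 1:]"

lemma poly_char_poly2: "poly (char_poly2 B) x = (x - B$1$1) * (x - B$2$2) - B$1$2 * B$2$1"
  by (simp add: char_poly2_def det_2 trace_2 algebra_simps)

lemma cayley_hamilton_2x2:
  fixes B :: "'a::comm_ring_1^2^2"
  shows "B ** B = mat (trace B) ** B - mat (det B)"
  by (simp add: mat2_eq_iff det_2 trace_2 algebra_simps)

lemma matpow_2x2_eq_linear: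
  fixes B :: "'a::comm_ring_1^2^2"
  shows "\<exists>a b. matpow B k = mat a + mat b ** B \<and> char_poly2 B dvd monom 1 k - [:a, b:]"
proof (induction k)
  case 0
  show ?case
    by (intro exI[of _ 1] exI[of _ 0]) (simp add: mat2_eq_iff monom_0 one_pCons)
next
  case (Suc k)
  then obtain a b where pow: "matpow B k = mat a + mat b ** B"
    and dvd: "char_poly2 B dvd monom 1 k - [:a, b:]"
    by blast
  have "matpow B (Suc k) = mat a ** B + mat b ** (B ** B)"
    by (simp add: pow matrix_mult_rdistrib flip: matrix_mul_assoc)
  also have "\<dots> = mat (- b * det B) + mat (a + b * trace B) ** B"
    unfolding cayley_hamilton_2x2 by (simp add: mat2_eq_iff algebra_simps)
  finally have "matpow B (Suc k) = mat (- b * det B) + mat (a + b * trace B) ** B" .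
  moreover have "monom 1 (Suc k) - [:- b * det B, a + b * trace B:]
      = [:0, 1:] * (monom 1 k - [:a, b:]) + smult b (char_poly2 B)"
    by (simp add: char_poly2_def monom_Suc algebra_simps)
  then have "char_poly2 B dvd monom 1 (Suc k) - [:- b * det B, a + b * trace B:]"
    by (simp only:) (intro dvd_add dvd_mult dvd_smult dvd dvd_refl)
  ultimately show ?case
    by blast
qed

lemma scalar_if_linear_combination_eq_self:
  fixes B :: "'a::field^2^2"
  assumes "mat a + mat b ** B = B" and "b \<noteq> 1"
  shows "B = mat (a / (1 - b))"
proof -
  have "1 - b \<noteq> 0"
    using assms(2) by simp
  moreover have "a = (1 - b) * B$1$1" "a = (1 - b) * B$2$2"
    and "(1 - b) * B$1$2 = 0" "(1 - b) * B$2$1 = 0"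
    using assms(1) unfolding mat2_eq_iff by (simp_all add: algebra_simps)
  ultimately show ?thesis
    by (simp add: mat2_eq_iff)
qed

lemma char_poly2_has_distinct_roots:
  fixes B :: "'a::{finite,field}^2^2"
  assumes "matpow B CARD('a) = B" and "\<forall>c. B \<noteq> mat c"
  shows "\<exists>r1 r2. r1 \<noteq> r2 \<and> poly (char_poly2 B) r1 = 0 \<and> poly (char_poly2 B) r2 = 0"
proof -
  obtain a b where pow: "matpow B CARD('a) = mat a + mat b ** B"
    and dvd: "char_poly2 B dvd monom 1 CARD('a) - [:a, b:]"
    using matpow_2x2_eq_linear by blast
  have "b = 1"
    using scalar_if_linear_combination_eq_self[of a b B] pow assms by metis
  then have "a = 0"
    using pow assms(1) by (simp add: mat2_eq_iff)
  have "card {x. poly (char_poly2 B) x = 0} = 2"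
    using card_poly_roots_eq_degree[of "char_poly2 B"] dvd \<open>a = 0\<close> \<open>b = 1\<close>
    by (simp add: char_poly2_def)
  then show ?thesis
    by (auto simp: card_2_iff)
qed

lemma diagonalizable_if_char_poly2_distinct_roots:
  fixes B :: "'a::field^2^2"
  assumes "r1 \<noteq> r2" and r1: "poly (char_poly2 B) r1 = 0" and r2: "poly (char_poly2 B) r2 = 0"
  shows "\<exists>P d1 d2. invertible P \<and> d1 \<noteq> d2 \<and> P ** B ** matrix_inv P = diag2 d1 d2"
proof (cases "B$1$2 = 0 \<and> B$2$1 = 0")
  case True
  then have "(r1 - B$1$1) * (r1 - B$2$2) = 0" "(r2 - B$1$1) * (r2 - B$2$2) = 0"
    using r1 r2 by (simp_all add: poly_char_poly2)
  then have "B$1$1 \<noteq> B$2$2"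
    using \<open>r1 \<noteq> r2\<close> by auto
  then show ?thesis
    using True invertible_mat_1
    by (intro exI[of _ "mat 1"] exI[of _ "B$1$1"] exI[of _ "B$2$2"]) (simp add: matrix_inv_mat_1 mat2_eq_iff)
next
  case False
  have root_eq: "r * r = (B$1$1 + B$2$2) * r - (B$1$1 * B$2$2 - B$1$2 * B$2$1)"
    if "poly (char_poly2 B) r = 0" for r
    using that by (simp add: poly_char_poly2 algebra_simps)
  consider (upper) "B$1$2 \<noteq> 0" | (lower) "B$2$1 \<noteq> 0"
    using False by blast
  then obtain E where "det E \<noteq> 0" and eigen: "B ** E = E ** diag2 r1 r2"
  proof cases
    case upper
    let ?E = "vector [vector [B$1$2, B$1$2], vector [r1 - B$1$1, r2 - B$1$1]] :: 'a^2^2"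
    have "det ?E = B$1$2 * (r2 - r1)"
      by (simp add: det_2 algebra_simps)
    moreover have "B ** ?E = ?E ** diag2 r1 r2"
      by (simp add: mat2_eq_iff algebra_simps root_eq[OF r1] root_eq[OF r2])
    ultimately show ?thesis
      using that[of ?E] upper \<open>r1 \<noteq> r2\<close> by simp
  next
    case lower
    let ?E = "vector [vector [r1 - B$2$2, r2 - B$2$2], vector [B$2$1, B$2$1]] :: 'a^2^2"
    have "det ?E = B$2$1 * (r1 - r2)"
      by (simp add: det_2 algebra_simps)
    moreover have "B ** ?E = ?E ** diag2 r1 r2"
      by (simp add: mat2_eq_iff algebra_simps root_eq[OF r1] root_eq[OF r2])
    ultimately show ?thesis
      using that[of ?E] lower \<open>r1 \<noteq> r2\<close> by simp
  qed
  then have "invertible E"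
    by (simp add: invertible_det_nz)
  define P where "P = matrix_inv E"
  have "invertible P" and "matrix_inv P = E"
    using matrix_inv_right[OF \<open>invertible E\<close>] matrix_inv_unique
    unfolding P_def invertible_def by blast+
  have "P ** B ** matrix_inv P = (P ** E) ** diag2 r1 r2"
    by (simp add: \<open>matrix_inv P = E\<close> eigen flip: matrix_mul_assoc)
  also have "\<dots> = diag2 r1 r2"
    using matrix_inv_right(2)[OF \<open>invertible E\<close>] by (simp add: P_def)
  finally show ?thesis
    using \<open>invertible P\<close> \<open>r1 \<noteq> r2\<close> by blast
qed

lemma commuting_matrices_simultaneously_diagonalizable:
  fixes S :: "('a::{finite,field}^2^2) set"
  assumes comm: "\<forall>A\<in>S. \<forall>B\<in>S. A ** B = B ** A"
    and pow: "\<forall>A\<in>S. matpow A CARD('a) = A"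
  shows "\<exists>P. invertible P \<and> (\<forall>A\<in>S. \<exists>x y. P ** A ** matrix_inv P = diag2 x y)"
proof (cases "\<exists>B\<in>S. \<forall>c. B \<noteq> mat c")
  case True
  then obtain B where "B \<in> S" and "\<forall>c. B \<noteq> mat c"
    by blast
  then obtain P d1 d2 where P: "invertible P" and "d1 \<noteq> d2"
    and PB: "P ** B ** matrix_inv P = diag2 d1 d2"
    using char_poly2_has_distinct_roots diagonalizable_if_char_poly2_distinct_roots pow by metis
  have "P ** A ** matrix_inv P = diag2 ((P ** A ** matrix_inv P)$1$1) ((P ** A ** matrix_inv P)$2$2)"
    if "A \<in> S" for A
  proof (rule commute_diag2_imp_diagonal[OF _ \<open>d1 \<noteq> d2\<close>])
    show "(P ** A ** matrix_inv P) ** diag2 d1 d2 = diag2 d1 d2 ** (P ** A ** matrix_inv P)"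
      using comm \<open>A \<in> S\<close> \<open>B \<in> S\<close> by (simp flip: PB conj_matrix_mult[OF P])
  qed
  then show ?thesis
    using P by blast
next
  case False
  then have "\<forall>A\<in>S. \<exists>x. mat 1 ** A ** matrix_inv (mat 1) = diag2 x x"
    by (auto simp: matrix_inv_mat_1 diag2_same)
  then show ?thesis
    using invertible_mat_1 by blast
qed

section \<open>Matrix fields\<close>

lemma matrix_field_ring_simps [simp]:
  "carrier (matrix_field_ring M z e) = M" "monoid.mult (matrix_field_ring M z e) = (**)"
  "one (matrix_field_ring M z e) = e" "zero (matrix_field_ring M z e) = z"
  "add (matrix_field_ring M z e) = (+)"
  by (simp_all add: matrix_field_ring_def)

lemma subfield_ring_simps [simp]:
  "carrier (subfield_ring S) = S" "monoid.mult (subfield_ring S) = (*)"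
  "one (subfield_ring S) = 1" "zero (subfield_ring S) = 0" "add (subfield_ring S) = (+)"
  by (simp_all add: subfield_ring_def)

lemma matrix_field_ring_eq_if_nonsingular:
  assumes "ring (matrix_field_ring M z e)" and "A \<in> M" and "det A \<noteq> 0"
  shows "matrix_field_ring M z e = matrix_field_ring M 0 (mat 1)"
proof -
  interpret ring "matrix_field_ring M z e"
    by fact
  have "z + z = z"
    using l_zero[OF zero_closed] by simp
  then have "z = 0"
    by simp
  have "A ** e = A"
    using r_one \<open>A \<in> M\<close> by simp
  then have "(matrix_inv A ** A) ** e = matrix_inv A ** A"
    by (simp flip: matrix_mul_assoc)
  moreover have "invertible A"
    using assms(3) by (simp add: invertible_det_nz)
  ultimately have "e = mat 1"
    by (simp add: matrix_inv_right)
  with \<open>z = 0\<close> show ?thesis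
    by simp
qed

lemma nat_pow_matrix_field_ring: "X [^]\<^bsub>matrix_field_ring M z (mat 1)\<^esub> (k::nat) = matpow X k"
  by (induction k) simp_all

lemma matpow_eq_self_if_ring_iso_roots_field:
  assumes "monoid (matrix_field_ring M z (mat 1))"
    and h: "h \<in> ring_iso (matrix_field_ring M z (mat 1)) (subfield_ring (roots_field m))"
    and "X \<in> M"
  shows "matpow X m = X"
proof -
  have closed: "matpow X k \<in> M" for k
    using monoid.nat_pow_closed[OF assms(1)] \<open>X \<in> M\<close> by (simp add: nat_pow_matrix_field_ring)
  have "h (matpow X k) = h X ^ k" for k
    by (induction k) (simp_all add: closed \<open>X \<in> M\<close> ring_iso_memE(2,4)[OF h, simplified])
  moreover have "h X ^ m = h X"
    using ring_iso_memE(1)[OF h] \<open>X \<in> M\<close> by (simp add: roots_field_def)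
  ultimately show ?thesis
    using ring_iso_memE(5)[OF h] closed \<open>X \<in> M\<close> by (simp add: bij_betw_def inj_on_def)
qed

lemma field_subfield_ring_if_ring_iso:
  assumes "field F" and h: "h \<in> ring_iso F (subfield_ring R)"
  shows "field (subfield_ring R)"
proof -
  interpret field F
    by fact
  have "h \<zero>\<^bsub>F\<^esub> + h \<zero>\<^bsub>F\<^esub> = h \<zero>\<^bsub>F\<^esub>"
    using ring_iso_memE(3)[OF h zero_closed zero_closed] by simp
  then have "h \<zero>\<^bsub>F\<^esub> = 0"
    by (metis add_cancel_right_right)
  then show ?thesis
    using ring_iso_imp_img_field[OF h] by (simp add: subfield_ring_def)
qed

lemma conj_ring_iso:
  fixes M :: "('a::field^2^2) set"
  assumes "invertible P"
  shows "(\<lambda>A. P ** A ** matrix_inv P) \<in> ring_iso (matrix_field_ring M 0 (mat 1))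
           (matrix_field_ring ((\<lambda>A. P ** A ** matrix_inv P) ` M) 0 (mat 1))"
proof (rule ring_iso_memI)
  show "bij_betw (\<lambda>A. P ** A ** matrix_inv P) (carrier (matrix_field_ring M 0 (mat 1)))
          (carrier (matrix_field_ring ((\<lambda>A. P ** A ** matrix_inv P) ` M) 0 (mat 1)))"
    using conj_inj[OF assms] by (auto simp: bij_betw_def inj_on_def)
qed (auto simp: conj_matrix_mult[OF assms] conj_matrix_add matrix_inv_right[OF assms])

lemma conj_matrix_field:
  fixes M :: "('a::field^2^2) set"
  assumes "field (matrix_field_ring M 0 (mat 1))" and "matrix_field_ring M 0 (mat 1) \<simeq> S"
    and "invertible P"
  shows "field (matrix_field_ring ((\<lambda>A. P ** A ** matrix_inv P) ` M) 0 (mat 1))" (is "field ?T")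
    and "matrix_field_ring ((\<lambda>A. P ** A ** matrix_inv P) ` M) 0 (mat 1) \<simeq> S"
proof -
  note iso = conj_ring_iso[OF assms(3), of M]
  show "field ?T"
    using field.ring_iso_imp_img_field[OF assms(1) iso] by (simp add: matrix_field_ring_def)
  have "?T \<simeq> matrix_field_ring M 0 (mat 1)"
    using iso ring_iso_sym[OF field.is_ring[OF assms(1)]] unfolding is_ring_iso_def by blast
  then show "?T \<simeq> S"
    using assms(2) by (rule ring_iso_trans)
qed

lemma diagonal_entry_ring_iso:
  fixes D :: "('a::{finite,field}^2^2) set" and i :: 2
  assumes field: "field (matrix_field_ring D 0 (mat 1))"
    and h: "h \<in> ring_iso (matrix_field_ring D 0 (mat 1)) (subfield_ring (roots_field m :: 'a set))"
    and diag: "\<forall>X\<in>D. \<exists>x y. X = diag2 x y"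
  shows "(\<lambda>X. X$i$i) \<in> ring_iso (matrix_field_ring D 0 (mat 1)) (subfield_ring (roots_field m))"
proof -
  let ?F = "matrix_field_ring D 0 (mat 1)" and ?R = "subfield_ring (roots_field m)"
  interpret field ?F
    by fact
  have entry_mult: "(X ** Y)$i$i = X$i$i * Y$i$i" if "X \<in> D" "Y \<in> D" for X Y
    using diag that exhaust_2[of i] by fastforce
  have entry_root: "X$i$i \<in> roots_field m" if X: "X \<in> D" for X
  proof -
    obtain x y where X_eq: "X = diag2 x y"
      using diag X by blast
    have "matpow (diag2 x y) m = diag2 x y"
      using matpow_eq_self_if_ring_iso_roots_field[OF monoid_axioms h X] by (simp add: X_eq)
    then show ?thesis
      using exhaust_2[of i] by (auto simp: X_eq matpow_diag2 roots_field_def mat2_eq_iff)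
  qed
  have hom: "(\<lambda>X. X$i$i) \<in> ring_hom ?F ?R"
    by (rule ring_hom_memI) (simp_all add: entry_mult entry_root mat_def)
  have "inj_on (\<lambda>X. X$i$i) D"
    using non_trivial_field_hom_is_inj[OF hom field field_subfield_ring_if_ring_iso[OF field h]]
    by simp
  moreover have "(\<lambda>X. X$i$i) ` D = roots_field m"
  proof (rule card_subset_eq)
    show "card ((\<lambda>X. X$i$i) ` D) = card (roots_field m :: 'a set)"
      using card_image[OF \<open>inj_on (\<lambda>X. X$i$i) D\<close>] bij_betw_same_card[OF ring_iso_memE(5)[OF h]]
      by simp
  qed (use entry_root in auto)
  ultimately show ?thesis
    using hom by (simp add: ring_iso_def bij_betw_def)
qed

lemma diagonal_matrix_field_eq_graph:
  fixes D :: "('a::{finite,field}^2^2) set"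
  assumes field: "field (matrix_field_ring D 0 (mat 1))"
    and iso: "matrix_field_ring D 0 (mat 1) \<simeq> subfield_ring (roots_field m :: 'a set)"
    and diag: "\<forall>X\<in>D. \<exists>x y. X = diag2 x y"
  shows "\<exists>\<sigma>. \<sigma> \<in> ring_iso (subfield_ring (roots_field m)) (subfield_ring (roots_field m))
           \<and> D = {diag2 x (\<sigma> x) | x. x \<in> roots_field m}"
proof -
  obtain h
    where h: "h \<in> ring_iso (matrix_field_ring D 0 (mat 1)) (subfield_ring (roots_field m :: 'a set))"
    using iso unfolding is_ring_iso_def by auto
  note entry1 = diagonal_entry_ring_iso[OF field h diag, of 1]
  note entry2 = diagonal_entry_ring_iso[OF field h diag, of 2]
  define \<sigma> where "\<sigma> = (\<lambda>X. X$2$2) \<circ> inv_into D (\<lambda>X. X$1$1)"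
  have "\<sigma> \<in> ring_iso (subfield_ring (roots_field m)) (subfield_ring (roots_field m))"
    using ring_iso_set_trans[OF ring_iso_set_sym[OF field.is_ring[OF field] entry1] entry2]
    by (simp add: \<sigma>_def)
  moreover have "D = {diag2 x (\<sigma> x) | x. x \<in> roots_field m}"
  proof -
    have bij: "bij_betw (\<lambda>X. X$1$1) D (roots_field m)"
      using ring_iso_memE(5)[OF entry1] by simp
    have graph: "X = diag2 (X$1$1) (\<sigma> (X$1$1))" if "X \<in> D" for X
      using diag that inv_into_f_f[OF bij_betw_imp_inj_on[OF bij] that] by (auto simp: \<sigma>_def)
    have "diag2 x (\<sigma> x) \<in> D" if x: "x \<in> roots_field m" for x
    proof -
      obtain X where "X \<in> D" and "x = X$1$1"
        using bij x by (auto simp: bij_betw_def)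
      then show ?thesis
        using graph by auto
    qed
    moreover have "X \<in> {diag2 x (\<sigma> x) | x. x \<in> roots_field m}" if "X \<in> D" for X
      using graph[OF that] bij that by (auto simp: bij_betw_def intro!: exI[of _ "X$1$1"])
    ultimately show ?thesis
      by blast
  qed
  ultimately show ?thesis
    by blast
qed

lemma matrix_field_similar_to_diagonal_graph:
  fixes M :: "('a::{finite,field}^2^2) set"
  assumes field: "field (matrix_field_ring M 0 (mat 1))"
    and iso: "matrix_field_ring M 0 (mat 1) \<simeq> subfield_ring (roots_field m :: 'a set)"
    and card: "CARD('a) = m ^ k"
  shows "\<exists>P \<sigma>. invertible P
           \<and> \<sigma> \<in> ring_iso (subfield_ring (roots_field m)) (subfield_ring (roots_field m))
           \<and> (\<lambda>A. P ** A ** matrix_inv P) ` M = {diag2 x (\<sigma> x) | x. x \<in> roots_field m}"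
proof -
  interpret field "matrix_field_ring M 0 (mat 1)"
    by fact
  obtain h where "h \<in> ring_iso (matrix_field_ring M 0 (mat 1)) (subfield_ring (roots_field m :: 'a set))"
    using iso unfolding is_ring_iso_def by auto
  then have "\<forall>X\<in>M. matpow X CARD('a) = X"
    using matpow_eq_self_if_ring_iso_roots_field[OF monoid_axioms] matpow_power_eq_self card by metis
  moreover have "\<forall>X\<in>M. \<forall>Y\<in>M. X ** Y = Y ** X"
    using m_comm by simp
  ultimately obtain P where P: "invertible P"
    and "\<forall>X\<in>M. \<exists>x y. P ** X ** matrix_inv P = diag2 x y"
    using commuting_matrices_simultaneously_diagonalizable by blast
  then show ?thesis
    using diagonal_matrix_field_eq_graph[OF conj_matrix_field[OF field iso P]] by blast
qed

theorem theorem3p13: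
  fixes M :: "(('a::{finite,field})^2^2) set"
    and q n t :: nat
  assumes q_pp: "\<exists>p k. prime p \<and> k > 0 \<and> q = p ^ k"
    and card_field: "CARD('a) = q ^ n"
    and t_ge: "1 \<le> t" and t_le: "t \<le> n" and t_dvd: "t dvd n"
    and mf: "\<exists>z e. field (matrix_field_ring M z e)
               \<and> matrix_field_ring M z e \<simeq> subfield_ring (roots_field (q ^ t) :: 'a set)"
    and nonsing: "\<exists>A\<in>M. det A \<noteq> 0"
  shows "\<exists>P \<sigma>. invertible P
           \<and> \<sigma> \<in> ring_iso (subfield_ring (roots_field (q ^ t)))
                           (subfield_ring (roots_field (q ^ t)))
           \<and> (\<lambda>A. P ** A ** matrix_inv P) ` M
               = {diag2 x (\<sigma> x) | x. x \<in> roots_field (q ^ t)}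
           \<and> ((\<forall>x \<in> roots_field q. diag2 x x \<in> M)
               \<longrightarrow> (\<forall>x \<in> roots_field q. \<sigma> x = x))"
proof -
  obtain z e where field: "field (matrix_field_ring M z e)"
    and iso: "matrix_field_ring M z e \<simeq> subfield_ring (roots_field (q ^ t) :: 'a set)"
    using mf by blast
  obtain A where "A \<in> M" and "det A \<noteq> 0"
    using nonsing by blast
  then have "matrix_field_ring M z e = matrix_field_ring M 0 (mat 1)"
    by (rule matrix_field_ring_eq_if_nonsingular[OF field.is_ring[OF field]])
  with field iso have "field (matrix_field_ring M 0 (mat 1))"
    and "matrix_field_ring M 0 (mat 1) \<simeq> subfield_ring (roots_field (q ^ t) :: 'a set)"
    by simp_all
  moreover have "CARD('a) = (q ^ t) ^ (n div t)"
    using card_field t_dvd by (simp flip: power_mult)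
  ultimately obtain P \<sigma> where P: "invertible P"
    and \<sigma>: "\<sigma> \<in> ring_iso (subfield_ring (roots_field (q ^ t))) (subfield_ring (roots_field (q ^ t)))"
    and graph: "(\<lambda>A. P ** A ** matrix_inv P) ` M = {diag2 x (\<sigma> x) | x. x \<in> roots_field (q ^ t)}"
    by (blast dest: matrix_field_similar_to_diagonal_graph)
  have "\<sigma> x = x" if "diag2 x x \<in> M" for x
  proof -
    have "diag2 x x \<in> (\<lambda>A. P ** A ** matrix_inv P) ` M"
      using conj_mat[OF P, of x] that by (force simp: diag2_same)
    then show ?thesis
      using graph by (auto simp: mat2_eq_iff)
  qed
  then show ?thesis
    using P \<sigma> graph by blast
qed

end
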